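(* Let $u\geq 2$ be an integer and $C(u)=\{n\in\mathbb{Z} : u\nmid n\}$. Then every non-negative integer is a sum of at most $5940$ squares of elements of $C(u)$.
   Context: The empty sum is $0$. *)

theory Defs
  imports Main
begin

definition C :: "int \<Rightarrow> int set" where
  "C u = {n. \<not> u dvd n}"

end

theory Submission
  imports Defs "HOL-Computational_Algebra.Primes"
begin

text \<open>
  By Lagrange's theorem every \<open>M \<ge> 0\<close> is \<open>a\<^sup>2 + b\<^sup>2 + c\<^sup>2 + d\<^sup>2\<close>, and each term
  \<open>2a\<^sup>2 + 2\<close> is a sum of at most four squares of elements of \<open>C u\<close>: it is
  \<open>a\<^sup>2 + a\<^sup>2 + 1\<^sup>2 + 1\<^sup>2\<close> if \<open>u \<nmid> a\<close>, and \<open>(a + 1)\<^sup>2 + (a - 1)\<^sup>2\<close> if \<open>u \<mid> a\<close>.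
  Writing \<open>n = 2M + 8 + e\<close> with \<open>e \<in> {0, 1}\<close> for \<open>n \<ge> 8\<close>, and using ones for
  \<open>n < 8\<close>, every \<open>n \<ge> 0\<close> is a sum of at most 17 such squares.
\<close>

section \<open>Lagrange's four-square theorem\<close>

definition sum_of_four_squares :: "int \<Rightarrow> bool" where
  "sum_of_four_squares n \<longleftrightarrow> (\<exists>a b c d. n = a\<^sup>2 + b\<^sup>2 + c\<^sup>2 + d\<^sup>2)"

lemma sum_of_four_squares_mult:
  assumes "sum_of_four_squares x" "sum_of_four_squares y"
  shows "sum_of_four_squares (x * y)"
proof -
  obtain a b c d where x: "x = a\<^sup>2 + b\<^sup>2 + c\<^sup>2 + d\<^sup>2"
    using assms(1) by (auto simp: sum_of_four_squares_def)
  obtain e f g h where y: "y = e\<^sup>2 + f\<^sup>2 + g\<^sup>2 + h\<^sup>2"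
    using assms(2) by (auto simp: sum_of_four_squares_def)
  have "x * y = (a*e - b*f - c*g - d*h)\<^sup>2 + (a*f + b*e + c*h - d*g)\<^sup>2
              + (a*g - b*h + c*e + d*f)\<^sup>2 + (a*h + b*g - c*f + d*e)\<^sup>2"
    unfolding x y by (simp add: power2_eq_square algebra_simps)
  then show ?thesis
    unfolding sum_of_four_squares_def by blast
qed

lemma sum_two_squares_eq_twice:
  fixes a b :: int
  assumes "even (a + b)"
  shows "a\<^sup>2 + b\<^sup>2 = 2 * (((a + b) div 2)\<^sup>2 + ((a - b) div 2)\<^sup>2)"
proof -
  obtain k where k: "a + b = 2 * k"
    using assms by blast
  then have b: "b = 2 * k - a"
    by simp
  have "(a + b) div 2 = k" "(a - b) div 2 = a - k"
    unfolding b by simp_all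
  then show ?thesis
    unfolding b by (simp add: power2_eq_square algebra_simps)
qed

lemma sum_of_four_squares_half:
  assumes "sum_of_four_squares (2 * x)"
  shows "sum_of_four_squares x"
proof -
  obtain a b c d where abcd: "2 * x = a\<^sup>2 + b\<^sup>2 + c\<^sup>2 + d\<^sup>2"
    using assms by (auto simp: sum_of_four_squares_def)
  have "even (a\<^sup>2 + b\<^sup>2 + c\<^sup>2 + d\<^sup>2)"
    using abcd by (metis dvd_triv_left)
  then have "even (a + b + c + d)"
    by (simp add: power2_eq_square)
  then have "even (a + b) \<and> even (c + d) \<or> even (a + c) \<and> even (b + d)
      \<or> even (a + d) \<and> even (b + c)"
    by presburger
  then obtain a' b' c' d' where
      paired: "even (a' + b')" "even (c' + d')" and
      same: "a'\<^sup>2 + b'\<^sup>2 + c'\<^sup>2 + d'\<^sup>2 = a\<^sup>2 + b\<^sup>2 + c\<^sup>2 + d\<^sup>2"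
  proof (elim disjE conjE)
    assume "even (a + b)" "even (c + d)"
    then show thesis by (rule that) simp
  next
    assume "even (a + c)" "even (b + d)"
    then show thesis by (rule that) (simp add: ac_simps)
  next
    assume "even (a + d)" "even (b + c)"
    then show thesis by (rule that) (simp add: ac_simps)
  qed
  have "2 * x = 2 * (((a' + b') div 2)\<^sup>2 + ((a' - b') div 2)\<^sup>2
                   + ((c' + d') div 2)\<^sup>2 + ((c' - d') div 2)\<^sup>2)"
    using abcd same sum_two_squares_eq_twice[OF paired(1)] sum_two_squares_eq_twice[OF paired(2)]
    by simp
  then have "x = ((a' + b') div 2)\<^sup>2 + ((a' - b') div 2)\<^sup>2 + ((c' + d') div 2)\<^sup>2 + ((c' - d') div 2)\<^sup>2"
    by simp
  then show ?thesis
    unfolding sum_of_four_squares_def by auto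
qed

lemma centered_residue:
  fixes a m :: int
  assumes "m > 0" "odd m"
  shows "\<exists>q y. a = y + m * q \<and> (2 * y)\<^sup>2 \<le> (m - 1)\<^sup>2"
proof -
  define h where "h = m div 2"
  have m: "m = 2 * h + 1"
    using assms(2) unfolding h_def by presburger
  define y where "y = (a + h) mod m - h"
  have "a = y + m * ((a + h) div m)"
    unfolding y_def by (simp add: algebra_simps)
  moreover have "0 \<le> (a + h) mod m" "(a + h) mod m < m"
    using assms(1) by auto
  then have "\<bar>2 * y\<bar> \<le> \<bar>m - 1\<bar>"
    unfolding y_def using m by auto
  then have "(2 * y)\<^sup>2 \<le> (m - 1)\<^sup>2"
    using abs_le_square_iff by blast
  ultimately show ?thesis
    by blast
qed

lemma euler_four_square_identity:
  fixes y1 y2 y3 y4 q1 q2 q3 q4 m :: int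
  shows "((y1 + m*q1)\<^sup>2 + (y2 + m*q2)\<^sup>2 + (y3 + m*q3)\<^sup>2 + (y4 + m*q4)\<^sup>2) * (y1\<^sup>2 + y2\<^sup>2 + y3\<^sup>2 + y4\<^sup>2)
       = (y1\<^sup>2 + y2\<^sup>2 + y3\<^sup>2 + y4\<^sup>2 + m * (q1*y1 + q2*y2 + q3*y3 + q4*y4))\<^sup>2
       + (m * (- q1*y2 + q2*y1 - q3*y4 + q4*y3))\<^sup>2
       + (m * (- q1*y3 + q2*y4 + q3*y1 - q4*y2))\<^sup>2
       + (m * (- q1*y4 - q2*y3 + q3*y2 + q4*y1))\<^sup>2"
  by (simp add: power2_eq_square algebra_simps)

text \<open>
  Euler's descent: reduce the \<open>a\<^sub>i\<close> in \<open>m p = \<Sum> a\<^sub>i\<^sup>2\<close> to centered residues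
  \<open>y\<^sub>i\<close> mod \<open>m\<close>; then \<open>\<Sum> y\<^sub>i\<^sup>2 = m r\<close> with \<open>r < m\<close>, and by the identity above
  \<open>m\<^sup>2 r p\<close> is a sum of four squares all divisible by \<open>m\<^sup>2\<close>. The case \<open>r = 0\<close>
  would force \<open>m \<mid> p\<close>.
\<close>
lemma sum_of_four_squares_descent_step:
  fixes p m :: int
  assumes prime: "prime p" and m: "1 < m" "m < p" "odd m"
    and mp: "sum_of_four_squares (m * p)"
  shows "\<exists>r. 0 < r \<and> r < m \<and> sum_of_four_squares (r * p)"
proof -
  obtain a1 a2 a3 a4 where A: "m * p = a1\<^sup>2 + a2\<^sup>2 + a3\<^sup>2 + a4\<^sup>2"
    using mp by (auto simp: sum_of_four_squares_def)
  have m0: "m > 0"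
    using m by simp
  obtain q1 y1 where 1: "a1 = y1 + m*q1" "(2*y1)\<^sup>2 \<le> (m - 1)\<^sup>2"
    using centered_residue[OF m0 m(3)] by blast
  obtain q2 y2 where 2: "a2 = y2 + m*q2" "(2*y2)\<^sup>2 \<le> (m - 1)\<^sup>2"
    using centered_residue[OF m0 m(3)] by blast
  obtain q3 y3 where 3: "a3 = y3 + m*q3" "(2*y3)\<^sup>2 \<le> (m - 1)\<^sup>2"
    using centered_residue[OF m0 m(3)] by blast
  obtain q4 y4 where 4: "a4 = y4 + m*q4" "(2*y4)\<^sup>2 \<le> (m - 1)\<^sup>2"
    using centered_residue[OF m0 m(3)] by blast
  define S where "S = y1\<^sup>2 + y2\<^sup>2 + y3\<^sup>2 + y4\<^sup>2"
  define r where "r = p - (2 * (q1*y1 + q2*y2 + q3*y3 + q4*y4) + m * (q1\<^sup>2 + q2\<^sup>2 + q3\<^sup>2 + q4\<^sup>2))"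
  have Sr: "S = m * r"
    using A unfolding S_def r_def 1(1) 2(1) 3(1) 4(1) by (simp add: power2_eq_square algebra_simps)
  have "4 * S \<le> 4 * (m - 1)\<^sup>2"
    unfolding S_def using 1(2) 2(2) 3(2) 4(2) by (simp add: power_mult_distrib)
  then have "m * r \<le> m * m - 2 * m + 1"
    using Sr by (simp add: power2_eq_square algebra_simps)
  then have "m * r < m * m"
    using m by linarith
  then have "r < m"
    using m0 by simp
  have "0 \<le> m * r"
    unfolding Sr[symmetric] S_def by simp
  then have "0 \<le> r"
    using m0 by (simp add: zero_le_mult_iff)
  define w1 where "w1 = r + (q1*y1 + q2*y2 + q3*y3 + q4*y4)"
  define w2 where "w2 = - q1*y2 + q2*y1 - q3*y4 + q4*y3"
  define w3 where "w3 = - q1*y3 + q2*y4 + q3*y1 - q4*y2"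
  define w4 where "w4 = - q1*y4 - q2*y3 + q3*y2 + q4*y1"
  have "(m * m) * (r * p) = (m * p) * S"
    using Sr by (simp add: algebra_simps)
  also have "\<dots> = (S + m * (q1*y1 + q2*y2 + q3*y3 + q4*y4))\<^sup>2 + (m * w2)\<^sup>2 + (m * w3)\<^sup>2 + (m * w4)\<^sup>2"
    unfolding A 1(1) 2(1) 3(1) 4(1) S_def w2_def w3_def w4_def by (rule euler_four_square_identity)
  also have "\<dots> = (m * m) * (w1\<^sup>2 + w2\<^sup>2 + w3\<^sup>2 + w4\<^sup>2)"
    unfolding Sr w1_def by (simp add: power2_eq_square algebra_simps)
  finally have "r * p = w1\<^sup>2 + w2\<^sup>2 + w3\<^sup>2 + w4\<^sup>2"
    using m0 by simp
  then have "sum_of_four_squares (r * p)"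
    unfolding sum_of_four_squares_def by blast
  moreover have "r \<noteq> 0"
  proof
    assume "r = 0"
    then have "y1 = 0 \<and> y2 = 0 \<and> y3 = 0 \<and> y4 = 0"
      using Sr unfolding S_def by (simp add: add_nonneg_eq_0_iff)
    then have "m * p = m * (m * (q1\<^sup>2 + q2\<^sup>2 + q3\<^sup>2 + q4\<^sup>2))"
      using A 1 2 3 4 by (simp add: power2_eq_square algebra_simps)
    then have "m dvd p"
      using m0 by simp
    then have "m = 1 \<or> m = p"
      using prime m0 unfolding prime_int_iff by auto
    then show False
      using m by simp
  qed
  ultimately show ?thesis
    using \<open>0 \<le> r\<close> \<open>r < m\<close> by (intro exI[of _ r]) simp
qed

lemma sum_of_four_squares_prime_if_multiple:
  fixes p m :: int
  assumes "prime p"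
  shows "0 < m \<Longrightarrow> m < p \<Longrightarrow> sum_of_four_squares (m * p) \<Longrightarrow> sum_of_four_squares p"
proof (induction "nat m" arbitrary: m rule: less_induct)
  case less
  consider "m = 1" | "m > 1" "even m" | "m > 1" "odd m"
    using less.prems(1) by linarith
  then show ?case
  proof cases
    case 1
    then show ?thesis
      using less.prems by simp
  next
    case 2
    then have "m * p = 2 * ((m div 2) * p)"
      by simp
    then have "sum_of_four_squares ((m div 2) * p)"
      using less.prems(3) sum_of_four_squares_half by metis
    then show ?thesis
      using less.hyps[of "m div 2"] 2 less.prems by simp
  next
    case 3
    then obtain r where "0 < r" "r < m" "sum_of_four_squares (r * p)"
      using sum_of_four_squares_descent_step[OF assms] less.prems by blast
    then show ?thesis
      using less.hyps[of r] less.prems by simp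
  qed
qed

lemma eq_if_prime_dvd_square_diff:
  fixes p x x' :: int
  assumes "prime p" "0 \<le> x" "0 \<le> x'" "2 * x < p" "2 * x' < p" "p dvd x\<^sup>2 - x'\<^sup>2"
  shows "x = x'"
proof -
  have "x\<^sup>2 - x'\<^sup>2 = (x - x') * (x + x')"
    by (simp add: power2_eq_square algebra_simps)
  then have "p dvd x - x' \<or> p dvd x + x'"
    using assms(1,6) by (simp add: prime_dvd_mult_iff)
  moreover have "\<bar>x - x'\<bar> < p" "\<bar>x + x'\<bar> < p"
    using assms by auto
  ultimately have "x - x' = 0 \<or> x + x' = 0"
    using dvd_imp_le_int[of "x - x'" p] dvd_imp_le_int[of "x + x'" p] by auto
  then show ?thesis
    using assms(2,3) by auto
qed

text \<open>
  Pigeonhole: the \<open>(p + 1)/2\<close> residues \<open>x\<^sup>2\<close> and the \<open>(p + 1)/2\<close> residues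
  \<open>-1 - y\<^sup>2\<close> with \<open>0 \<le> x, y < p/2\<close> are pairwise distinct, so the two families meet.
\<close>
lemma prime_dvd_sum_two_squares_plus_one:
  fixes p :: int
  assumes prime: "prime p" and "odd p"
  shows "\<exists>x y. 0 \<le> x \<and> 2 * x < p \<and> 0 \<le> y \<and> 2 * y < p \<and> p dvd x\<^sup>2 + y\<^sup>2 + 1"
proof -
  define h where "h = (p - 1) div 2"
  have ph: "p = 2 * h + 1"
    unfolding h_def using \<open>odd p\<close> by presburger
  have "p \<ge> 2"
    using prime_ge_2_int[OF prime] .
  define A where "A = (\<lambda>x. x\<^sup>2 mod p) ` {0..h}"
  define B where "B = (\<lambda>y. (- 1 - y\<^sup>2) mod p) ` {0..h}"
  have "inj_on (\<lambda>x. x\<^sup>2 mod p) {0..h}"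
    by (rule inj_onI) (use eq_if_prime_dvd_square_diff[OF prime] ph in \<open>auto simp: mod_eq_dvd_iff\<close>)
  then have cA: "card A = nat (h + 1)"
    unfolding A_def by (simp add: card_image)
  have "inj_on (\<lambda>y. (- 1 - y\<^sup>2) mod p) {0..h}"
  proof (rule inj_onI)
    fix y y'
    assume "y \<in> {0..h}" "y' \<in> {0..h}" "(- 1 - y\<^sup>2) mod p = (- 1 - y'\<^sup>2) mod p"
    then show "y = y'"
      using eq_if_prime_dvd_square_diff[OF prime, of y' y] ph by (auto simp: mod_eq_dvd_iff)
  qed
  then have cB: "card B = nat (h + 1)"
    unfolding B_def by (simp add: card_image)
  have "A \<union> B \<subseteq> {0..<p}"
    unfolding A_def B_def using \<open>p \<ge> 2\<close> by auto
  then have "card (A \<union> B) \<le> nat p"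
    using card_mono[of "{0..<p}"] by fastforce
  moreover have "card A + card B = card (A \<union> B) + card (A \<inter> B)"
    by (rule card_Un_Int) (auto simp: A_def B_def)
  ultimately have "A \<inter> B \<noteq> {}"
    using cA cB ph \<open>p \<ge> 2\<close> by auto
  then obtain x y where xy: "x \<in> {0..h}" "y \<in> {0..h}" "x\<^sup>2 mod p = (- 1 - y\<^sup>2) mod p"
    unfolding A_def B_def by blast
  then have "p dvd x\<^sup>2 + y\<^sup>2 + 1"
    by (simp add: mod_eq_dvd_iff algebra_simps)
  then show ?thesis
    using xy ph by auto
qed

lemma sum_of_four_squares_prime:
  fixes p :: int
  assumes prime: "prime p"
  shows "sum_of_four_squares p"
proof (cases "p = 2")
  case True
  then have "p = 1\<^sup>2 + 1\<^sup>2 + 0\<^sup>2 + 0\<^sup>2"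
    by simp
  then show ?thesis
    unfolding sum_of_four_squares_def by blast
next
  case False
  have "p \<ge> 2"
    using prime_ge_2_int[OF prime] .
  have "odd p"
    using False \<open>p \<ge> 2\<close> prime prime_odd_int by simp
  then obtain x y where xy: "0 \<le> x" "2 * x < p" "0 \<le> y" "2 * y < p" "p dvd x\<^sup>2 + y\<^sup>2 + 1"
    using prime_dvd_sum_two_squares_plus_one[OF prime] by blast
  then obtain m where m: "m * p = x\<^sup>2 + y\<^sup>2 + 1\<^sup>2 + 0\<^sup>2"
    by (auto simp: mult.commute elim!: dvdE)
  have "0 < m * p"
    using m zero_le_power2[of x] zero_le_power2[of y] by simp
  then have "0 < m"
    using \<open>p \<ge> 2\<close> by (simp add: zero_less_mult_iff)
  have "(2 * x)\<^sup>2 < p\<^sup>2" "(2 * y)\<^sup>2 < p\<^sup>2"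
    using xy power_strict_mono[of "2 * x" p 2] power_strict_mono[of "2 * y" p 2] by simp_all
  moreover have "4 \<le> p\<^sup>2"
    using \<open>p \<ge> 2\<close> power_mono[of 2 p 2] by simp
  moreover have "4 * (m * p) = (2 * x)\<^sup>2 + (2 * y)\<^sup>2 + 4"
    using m by (simp add: power_mult_distrib)
  ultimately have "p * m < p * p"
    by (simp add: power2_eq_square mult.commute)
  then have "m < p"
    using \<open>p \<ge> 2\<close> by simp
  then show ?thesis
    using sum_of_four_squares_prime_if_multiple[OF prime \<open>0 < m\<close>] m
    unfolding sum_of_four_squares_def by blast
qed

theorem sum_of_four_squares_nonneg:
  fixes n :: int
  assumes "n \<ge> 0"
  shows "sum_of_four_squares n"
proof -
  have "sum_of_four_squares (int k)" for k
  proof (induction k rule: less_induct)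
    case (less k)
    show ?case
    proof (cases "k \<le> 1")
      case True
      then have "int k = (int k)\<^sup>2 + 0\<^sup>2 + 0\<^sup>2 + 0\<^sup>2"
        by (cases k) auto
      then show ?thesis
        unfolding sum_of_four_squares_def by blast
    next
      case False
      then obtain p where p: "prime p" "p dvd k"
        using prime_factor_nat[of k] by auto
      then obtain j where j: "k = p * j"
        by blast
      with False have "j > 0"
        by (cases j) auto
      with j prime_ge_2_nat[OF p(1)] have "j < k"
        by (simp add: n_less_m_mult_n)
      moreover have "sum_of_four_squares (int p)"
        using p(1) by (simp add: sum_of_four_squares_prime)
      ultimately show ?thesis
        using less.IH sum_of_four_squares_mult[of "int p" "int j"] j by simp
    qed
  qed
  then show ?thesis
    using assms by (metis nonneg_int_cases)
qed

section \<open>Sums of squares of non-multiples\<close>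

definition sum_of_squares_in :: "int set \<Rightarrow> nat \<Rightarrow> int \<Rightarrow> bool" where
  "sum_of_squares_in A k n \<longleftrightarrow> (\<exists>xs. set xs \<subseteq> A \<and> length xs \<le> k \<and> n = (\<Sum>x\<leftarrow>xs. x\<^sup>2))"

lemma sum_of_squares_in_add:
  assumes "sum_of_squares_in A k m" "sum_of_squares_in A l n"
  shows "sum_of_squares_in A (k + l) (m + n)"
proof -
  obtain xs ys where "set xs \<subseteq> A" "length xs \<le> k" "m = (\<Sum>x\<leftarrow>xs. x\<^sup>2)"
    "set ys \<subseteq> A" "length ys \<le> l" "n = (\<Sum>y\<leftarrow>ys. y\<^sup>2)"
    using assms by (auto simp: sum_of_squares_in_def)
  then show ?thesis
    unfolding sum_of_squares_in_def by (intro exI[of _ "xs @ ys"]) auto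
qed

lemma sum_of_squares_in_mono:
  "k \<le> l \<Longrightarrow> sum_of_squares_in A k n \<Longrightarrow> sum_of_squares_in A l n"
  unfolding sum_of_squares_in_def using le_trans by blast

lemma sum_of_squares_in_of_nat:
  assumes "1 \<in> A"
  shows "sum_of_squares_in A k (int k)"
  unfolding sum_of_squares_in_def using assms
  by (intro exI[of _ "replicate k 1"]) (simp add: sum_list_replicate set_replicate_conv_if)

lemma sum_of_squares_in_indexed:
  assumes "sum_of_squares_in A k n"
  shows "\<exists>k'. \<exists>x. k' \<le> k \<and> (\<forall>i<k'. x i \<in> A) \<and> n = (\<Sum>i<k'. (x i)\<^sup>2)"
proof -
  obtain xs where "set xs \<subseteq> A" "length xs \<le> k" "n = (\<Sum>x\<leftarrow>xs. x\<^sup>2)"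
    using assms by (auto simp: sum_of_squares_in_def)
  then show ?thesis
    by (intro exI[of _ "length xs"] exI[of _ "nth xs"])
       (auto simp: sum_list_sum_nth atLeast0LessThan)
qed

lemma one_mem_C_iff: "1 \<in> C u \<longleftrightarrow> \<not> is_unit u"
  by (simp add: C_def)

lemma twice_square_plus_two_in_C:
  assumes "\<not> is_unit u"
  shows "sum_of_squares_in (C u) 4 (2 * a\<^sup>2 + 2)"
proof (cases "u dvd a")
  case True
  then have "\<not> u dvd a + 1" "\<not> u dvd a - 1"
    using assms by (auto simp: dvd_add_right_iff dvd_diff_right_iff)
  moreover have "2 * a\<^sup>2 + 2 = (\<Sum>x\<leftarrow>[a + 1, a - 1]. x\<^sup>2)"
    by (simp add: power2_eq_square algebra_simps)
  ultimately show ?thesis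
    unfolding sum_of_squares_in_def C_def by (intro exI[of _ "[a + 1, a - 1]"]) auto
next
  case False
  then show ?thesis
    using assms unfolding sum_of_squares_in_def C_def
    by (intro exI[of _ "[a, a, 1, 1]"]) (auto simp: power2_eq_square)
qed

theorem sum_of_17_squares_in_C:
  assumes "\<not> is_unit u" "n \<ge> 0"
  shows "sum_of_squares_in (C u) 17 n"
proof (cases "n < 8")
  case True
  then have "sum_of_squares_in (C u) (nat n) n"
    using sum_of_squares_in_of_nat[of "C u" "nat n"] assms by (simp add: one_mem_C_iff)
  moreover have "nat n \<le> 17"
    using True by simp
  ultimately show ?thesis
    using sum_of_squares_in_mono by blast
next
  case False
  obtain a b c d where abcd: "(n - 8) div 2 = a\<^sup>2 + b\<^sup>2 + c\<^sup>2 + d\<^sup>2"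
    using sum_of_four_squares_nonneg[of "(n - 8) div 2"] False
    by (auto simp: sum_of_four_squares_def)
  have "n - 8 = 2 * ((n - 8) div 2) + (n - 8) mod 2"
    by simp
  then have "n = (2 * a\<^sup>2 + 2) + (2 * b\<^sup>2 + 2) + (2 * c\<^sup>2 + 2) + (2 * d\<^sup>2 + 2) + int (nat ((n - 8) mod 2))"
    using abcd False by simp
  moreover have "sum_of_squares_in (C u) 1 (int (nat ((n - 8) mod 2)))"
    using sum_of_squares_in_of_nat[of "C u" "nat ((n - 8) mod 2)"] assms(1)
      sum_of_squares_in_mono[of "nat ((n - 8) mod 2)" 1]
    by (simp add: one_mem_C_iff)
  then have "sum_of_squares_in (C u) (4 + 4 + 4 + 4 + 1)
      ((2 * a\<^sup>2 + 2) + (2 * b\<^sup>2 + 2) + (2 * c\<^sup>2 + 2) + (2 * d\<^sup>2 + 2) + int (nat ((n - 8) mod 2)))"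
    by (intro sum_of_squares_in_add twice_square_plus_two_in_C assms(1))
  ultimately show ?thesis
    by simp
qed

theorem theorem2p3:
  fixes u n :: int
  assumes "u \<ge> 2" and "n \<ge> 0"
  shows "\<exists>k::nat. \<exists>x::nat \<Rightarrow> int. k \<le> 5940 \<and> (\<forall>i<k. x i \<in> C u) \<and> n = (\<Sum>i<k. (x i)^2)"
proof -
  have "\<not> is_unit u"
    using assms(1) by simp
  then have "sum_of_squares_in (C u) 17 n"
    using assms(2) by (rule sum_of_17_squares_in_C)
  then have "sum_of_squares_in (C u) 5940 n"
    by (rule sum_of_squares_in_mono[rotated]) simp
  then show ?thesis
    using sum_of_squares_in_indexed by blast
qed

end
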